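(* Let $\mathcal C$ be an operadic category and $\pi:d\to e$ a fibrewise trivial morphism of $\mathcal C$. Then a morphism $\varphi:c\to d$ is fibrewise trivial if and only if $\pi\varphi$ is fibrewise trivial.
   Context: Operadic categories: $\mathcal S$ is a skeleton of finite sets, with fixed equivalences $R_I:\mathcal S/I\to\mathcal S^I$ sending $f:J\to I$ to its fibres. An operadic category is a category $\mathcal C$ with a functor $|\cdot|:\mathcal C\to\mathcal S$ and functors $R_c:\mathcal C/c\to\mathcal C^{|c|}$ with $|\cdot|^{|c|}\circ R_c=R_{|c|}\circ(|\cdot|/c)$; the fibre $\psi^{-1}i$ of $\psi:c\to d$ at $i\in|d|$ is the $i$-th component of $R_d(\psi)$; for $\varphi:b\to c,\psi:c\to d$, $\varphi^\psi=R_d(\varphi:\psi\varphi\to\psi)$ with components $\varphi^\psi_j:(\psi\varphi)^{-1}j\to\psi^{-1}j$; $u$ is trivial if $|u|=1$ and $R_u=\mathrm{dom}$. Axioms: fibres of identities are trivial; double slice condition: for $\psi:c\to d$, $R_c\circ(\mathrm{dom}/\psi)=(\cong)\circ(\prod_jR_{\psi^{-1}j})\circ(R_d/\psi)$ as functors $(\mathcal C/d)/\psi\to\mathcal C^{|c|}$, via $\mathcal C^{|d|}/R_d\psi\cong\prod_j\mathcal C/\psi^{-1}j$ and $|c|\cong\sum_j|\psi|^{-1}j$ (on objects: $(\varphi^\psi_{|\psi|(i)})^{-1}i=\varphi^{-1}i$). A morphism of $\mathcal C$ is fibrewise trivial if all its fibres are trivial objects. *)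

theory Defs
  imports Main
begin

text \<open>The skeleton S of finite sets: objects are natural numbers n (standing for
  the set {0..<n}); a morphism J \<rightarrow> I is a function on nat, relevant on {0..<J}.
  The fixed equivalence R_I sends f : J \<rightarrow> I to its fibres, the fibre over i being
  identified with {0..<card(f^-1 i)} via the order-preserving enumeration below.\<close>

definition fibre_enum :: "(nat \<Rightarrow> nat) \<Rightarrow> nat \<Rightarrow> nat \<Rightarrow> nat list" where
  "fibre_enum f J i = sorted_list_of_set {x. x < J \<and> f x = i}"

text \<open>Data of an operadic category.
  crd c = |c|, crdm f = |f|;  fib psi j = psi^-1 j  (R_d on objects of C/d);
  fibm psi phi j = phi^psi_j  (R_d on the morphism phi : (b, psi phi) \<rightarrow> (c, psi) of C/d).
  cmp g f = g \<circ> f.\<close>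

record ('o, 'm) opcat =
  obj :: "'o set"
  mor :: "'m set"
  dm :: "'m \<Rightarrow> 'o"
  cd :: "'m \<Rightarrow> 'o"
  cmp :: "'m \<Rightarrow> 'm \<Rightarrow> 'm"
  ident :: "'o \<Rightarrow> 'm"
  crd :: "'o \<Rightarrow> nat"
  crdm :: "'m \<Rightarrow> nat \<Rightarrow> nat"
  fib :: "'m \<Rightarrow> nat \<Rightarrow> 'o"
  fibm :: "'m \<Rightarrow> 'm \<Rightarrow> nat \<Rightarrow> 'm"

definition hom :: "('o, 'm, 'x) opcat_scheme \<Rightarrow> 'o \<Rightarrow> 'o \<Rightarrow> 'm set" where
  "hom C a b = {f \<in> mor C. dm C f = a \<and> cd C f = b}"

definition category :: "('o, 'm, 'x) opcat_scheme \<Rightarrow> bool" where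
  "category C \<longleftrightarrow>
    (\<forall>f\<in>mor C. dm C f \<in> obj C \<and> cd C f \<in> obj C) \<and>
    (\<forall>a\<in>obj C. ident C a \<in> hom C a a) \<and>
    (\<forall>f\<in>mor C. \<forall>g\<in>mor C. cd C f = dm C g \<longrightarrow> cmp C g f \<in> hom C (dm C f) (cd C g)) \<and>
    (\<forall>f\<in>mor C. cmp C f (ident C (dm C f)) = f \<and> cmp C (ident C (cd C f)) f = f) \<and>
    (\<forall>f\<in>mor C. \<forall>g\<in>mor C. \<forall>h\<in>mor C. cd C f = dm C g \<and> cd C g = dm C h \<longrightarrow>
        cmp C h (cmp C g f) = cmp C (cmp C h g) f)"

definition card_functor :: "('o, 'm, 'x) opcat_scheme \<Rightarrow> bool" where
  "card_functor C \<longleftrightarrow>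
    (\<forall>f\<in>mor C. \<forall>x<crd C (dm C f). crdm C f x < crd C (cd C f)) \<and>
    (\<forall>a\<in>obj C. \<forall>x<crd C a. crdm C (ident C a) x = x) \<and>
    (\<forall>f\<in>mor C. \<forall>g\<in>mor C. cd C f = dm C g \<longrightarrow>
        (\<forall>x<crd C (dm C f). crdm C (cmp C g f) x = crdm C g (crdm C f x)))"

text \<open>The functors R_c : C/c \<rightarrow> C^|c|, with |.|^|c| \<circ> R_c = R_|c| \<circ> (|.|/c).\<close>
definition fibre_functors :: "('o, 'm, 'x) opcat_scheme \<Rightarrow> bool" where
  "fibre_functors C \<longleftrightarrow>
    (\<forall>\<psi>\<in>mor C. \<forall>j<crd C (cd C \<psi>).
        fib C \<psi> j \<in> obj C \<and>
        crd C (fib C \<psi> j) = card {x. x < crd C (dm C \<psi>) \<and> crdm C \<psi> x = j}) \<and>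
    (\<forall>\<psi>\<in>mor C. \<forall>\<phi>\<in>mor C. cd C \<phi> = dm C \<psi> \<longrightarrow> (\<forall>j<crd C (cd C \<psi>).
        fibm C \<psi> \<phi> j \<in> hom C (fib C (cmp C \<psi> \<phi>) j) (fib C \<psi> j) \<and>
        (\<forall>k<crd C (fib C (cmp C \<psi> \<phi>) j).
           fibre_enum (crdm C \<psi>) (crd C (dm C \<psi>)) j ! crdm C (fibm C \<psi> \<phi> j) k
           = crdm C \<phi> (fibre_enum (crdm C (cmp C \<psi> \<phi>)) (crd C (dm C \<phi>)) j ! k)))) \<and>
    (\<forall>\<psi>\<in>mor C. \<forall>j<crd C (cd C \<psi>). fibm C \<psi> (ident C (dm C \<psi>)) j = ident C (fib C \<psi> j)) \<and>
    (\<forall>\<psi>\<in>mor C. \<forall>\<phi>2\<in>mor C. \<forall>\<phi>1\<in>mor C. cd C \<phi>2 = dm C \<psi> \<and> cd C \<phi>1 = dm C \<phi>2 \<longrightarrow>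
       (\<forall>j<crd C (cd C \<psi>).
          fibm C \<psi> (cmp C \<phi>2 \<phi>1) j = cmp C (fibm C \<psi> \<phi>2 j) (fibm C (cmp C \<psi> \<phi>2) \<phi>1 j)))"

definition trivial_obj :: "('o, 'm, 'x) opcat_scheme \<Rightarrow> 'o \<Rightarrow> bool" where
  "trivial_obj C u \<longleftrightarrow> u \<in> obj C \<and> crd C u = 1 \<and>
    (\<forall>\<psi>\<in>mor C. cd C \<psi> = u \<longrightarrow> fib C \<psi> 0 = dm C \<psi>) \<and>
    (\<forall>\<psi>\<in>mor C. \<forall>\<phi>\<in>mor C. cd C \<psi> = u \<and> cd C \<phi> = dm C \<psi> \<longrightarrow> fibm C \<psi> \<phi> 0 = \<phi>)"

text \<open>Double slice condition, for psi : c \<rightarrow> d, on objects phi : b \<rightarrow> c and morphisms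
  chi : a \<rightarrow> b of (C/d)/psi, using |c| \<cong> \<Sum>_j |psi|^-1 j, i \<leftrightarrow> (j,k) with i the k-th
  element of the fibre of |psi| over j.\<close>
definition double_slice :: "('o, 'm, 'x) opcat_scheme \<Rightarrow> bool" where
  "double_slice C \<longleftrightarrow>
    (\<forall>\<psi>\<in>mor C. \<forall>\<phi>\<in>mor C. cd C \<phi> = dm C \<psi> \<longrightarrow>
      (\<forall>j<crd C (cd C \<psi>). \<forall>k<crd C (fib C \<psi> j).
        (let i = fibre_enum (crdm C \<psi>) (crd C (dm C \<psi>)) j ! k in
          fib C \<phi> i = fib C (fibm C \<psi> \<phi> j) k \<and>
          (\<forall>\<chi>\<in>mor C. cd C \<chi> = dm C \<phi> \<longrightarrow>
             fibm C \<phi> \<chi> i = fibm C (fibm C \<psi> \<phi> j) (fibm C (cmp C \<psi> \<phi>) \<chi> j) k))))"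

definition operadic_category :: "('o, 'm, 'x) opcat_scheme \<Rightarrow> bool" where
  "operadic_category C \<longleftrightarrow> category C \<and> card_functor C \<and> fibre_functors C \<and>
    (\<forall>c\<in>obj C. \<forall>i<crd C c. trivial_obj C (fib C (ident C c) i)) \<and>
    double_slice C"

definition fibrewise_trivial :: "('o, 'm, 'x) opcat_scheme \<Rightarrow> 'm \<Rightarrow> bool" where
  "fibrewise_trivial C f \<longleftrightarrow> (\<forall>i<crd C (cd C f). trivial_obj C (fib C f i))"

end

theory Submission
  imports Defs
begin

text \<open>A fibrewise trivial \<pi> has one-point fibres, so |\<pi>| is a bijection, and the double slice
  condition for \<pi> and the unique point i over j identifies the fibre of \<phi> at i with the
  fibre at 0 of \<phi>^\<pi>_j : (\<pi>\<phi>)^-1 j \<rightarrow> \<pi>^-1 j. As \<pi>^-1 j is trivial, the latter is the domain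
  (\<pi>\<phi>)^-1 j. Hence \<phi> and \<pi>\<phi> have the same fibres up to reindexing along |\<pi>|.\<close>

lemma fibre_enum_singleton:
  assumes "{x. x < J \<and> f x = j} = {i}"
  shows "fibre_enum f J j ! 0 = i"
  unfolding fibre_enum_def assms by simp

lemma card_fibre_of_fibrewise_trivial:
  assumes "fibre_functors C" and "\<pi> \<in> mor C" and "fibrewise_trivial C \<pi>"
    and "j < crd C (cd C \<pi>)"
  shows "card {x. x < crd C (dm C \<pi>) \<and> crdm C \<pi> x = j} = 1"
proof -
  have "crd C (fib C \<pi> j) = 1"
    using assms(3,4) unfolding fibrewise_trivial_def trivial_obj_def by blast
  moreover have "crd C (fib C \<pi> j) = card {x. x < crd C (dm C \<pi>) \<and> crdm C \<pi> x = j}"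
    using assms(1,2,4) unfolding fibre_functors_def by blast
  ultimately show ?thesis
    by simp
qed

lemma crdm_surj_of_fibrewise_trivial:
  assumes "fibre_functors C" and "\<pi> \<in> mor C" and "fibrewise_trivial C \<pi>"
    and "j < crd C (cd C \<pi>)"
  obtains i where "i < crd C (dm C \<pi>)" and "crdm C \<pi> i = j"
proof -
  obtain i where "{x. x < crd C (dm C \<pi>) \<and> crdm C \<pi> x = j} = {i}"
    using card_fibre_of_fibrewise_trivial[OF assms] by (rule card_1_singletonE)
  then show ?thesis
    using that by blast
qed

lemma fib_eq_fib_comp_of_fibrewise_trivial:
  assumes oc: "operadic_category C"
    and \<pi>: "\<pi> \<in> mor C" and ft: "fibrewise_trivial C \<pi>"
    and \<phi>: "\<phi> \<in> mor C" and cd\<phi>: "cd C \<phi> = dm C \<pi>"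
    and i: "i < crd C (dm C \<pi>)"
  shows "fib C \<phi> i = fib C (cmp C \<pi> \<phi>) (crdm C \<pi> i)"
proof -
  define j where "j = crdm C \<pi> i"
  have ff: "fibre_functors C" and ds: "double_slice C"
    using oc unfolding operadic_category_def by auto
  have j: "j < crd C (cd C \<pi>)"
    using oc \<pi> i unfolding operadic_category_def card_functor_def j_def by blast
  have triv: "trivial_obj C (fib C \<pi> j)"
    using ft j unfolding fibrewise_trivial_def by blast
  have "card {x. x < crd C (dm C \<pi>) \<and> crdm C \<pi> x = j} = 1"
    using card_fibre_of_fibrewise_trivial[OF ff \<pi> ft j] .
  moreover have "i \<in> {x. x < crd C (dm C \<pi>) \<and> crdm C \<pi> x = j}"
    using i j_def by simp
  ultimately have "{x. x < crd C (dm C \<pi>) \<and> crdm C \<pi> x = j} = {i}"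
    by (metis card_1_singletonE singletonD)
  then have enum: "fibre_enum (crdm C \<pi>) (crd C (dm C \<pi>)) j ! 0 = i"
    by (rule fibre_enum_singleton)
  have "0 < crd C (fib C \<pi> j)"
    using triv unfolding trivial_obj_def by simp
  then have "fib C \<phi> (fibre_enum (crdm C \<pi>) (crd C (dm C \<pi>)) j ! 0) = fib C (fibm C \<pi> \<phi> j) 0"
    using ds \<pi> \<phi> cd\<phi> j unfolding double_slice_def Let_def by blast
  then have "fib C \<phi> i = fib C (fibm C \<pi> \<phi> j) 0"
    unfolding enum .
  also have "\<dots> = fib C (cmp C \<pi> \<phi>) j"
  proof -
    have "fibm C \<pi> \<phi> j \<in> hom C (fib C (cmp C \<pi> \<phi>) j) (fib C \<pi> j)"
      using ff \<pi> \<phi> cd\<phi> j unfolding fibre_functors_def by blast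
    then show ?thesis
      using triv unfolding trivial_obj_def hom_def by auto
  qed
  finally show ?thesis
    unfolding j_def .
qed

theorem lemma8p2:
  fixes C :: "('o, 'm) opcat" and \<pi> \<phi> :: 'm
  assumes "operadic_category C"
    and "\<pi> \<in> mor C" and "fibrewise_trivial C \<pi>"
    and "\<phi> \<in> mor C" and "cd C \<phi> = dm C \<pi>"
  shows "fibrewise_trivial C \<phi> \<longleftrightarrow> fibrewise_trivial C (cmp C \<pi> \<phi>)"
proof -
  have ff: "fibre_functors C" and cf: "card_functor C" and cat: "category C"
    using assms(1) unfolding operadic_category_def by auto
  have cd_cmp: "cd C (cmp C \<pi> \<phi>) = cd C \<pi>"
    using cat assms(2,4,5) unfolding category_def hom_def by auto
  note fib_eq = fib_eq_fib_comp_of_fibrewise_trivial[OF assms]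
  show ?thesis
  proof
    assume triv_\<phi>: "fibrewise_trivial C \<phi>"
    show "fibrewise_trivial C (cmp C \<pi> \<phi>)"
      unfolding fibrewise_trivial_def cd_cmp
    proof (intro allI impI)
      fix j assume "j < crd C (cd C \<pi>)"
      then obtain i where i: "i < crd C (dm C \<pi>)" and "crdm C \<pi> i = j"
        by (rule crdm_surj_of_fibrewise_trivial[OF ff assms(2,3)])
      then have "fib C (cmp C \<pi> \<phi>) j = fib C \<phi> i"
        using fib_eq by simp
      then show "trivial_obj C (fib C (cmp C \<pi> \<phi>) j)"
        using triv_\<phi> i assms(5) unfolding fibrewise_trivial_def by simp
    qed
  next
    assume triv_comp: "fibrewise_trivial C (cmp C \<pi> \<phi>)"
    show "fibrewise_trivial C \<phi>"
      unfolding fibrewise_trivial_def assms(5)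
    proof (intro allI impI)
      fix i assume i: "i < crd C (dm C \<pi>)"
      then have "crdm C \<pi> i < crd C (cd C \<pi>)"
        using cf assms(2) unfolding card_functor_def by blast
      then show "trivial_obj C (fib C \<phi> i)"
        using triv_comp fib_eq[OF i] unfolding fibrewise_trivial_def cd_cmp by simp
    qed
  qed
qed

end
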